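(* Let $\mathcal{D}$ be a symmetric $2$-$(56,11,2)$ design (biplane) with point set $\{1,\dots,56\}$ and let $B=\{46,\dots,56\}$ be a block of $\mathcal{D}$. Let $A$ be the $56\times 56$ points-by-blocks incidence matrix of $\mathcal{D}$ with columns ordered so that the last column corresponds to $B$, so that $$A=\begin{pmatrix} A'' & \bar 0_{45}\\ A' & \bar 1_{11}\end{pmatrix},$$ where $A''$ is the $45\times 55$ incidence matrix of the residual design $\mathcal{D}_B$ (a $2$-$(45,9,2)$ design on points $1,\dots,45$) and $A'$ is the $11\times 55$ incidence matrix of the derived design $\mathcal{D}^B$. Let $L''$ and $L$ be the linear codes over $GF(3)$ spanned by the rows of $A''$ and of $A$ respectively. If $c=(c_1,\dots,c_{55})\in\{0,1\}^{55}$ has Hamming weight $12$ and lies in $(L'')^\perp$, then $c^*=(c_1,\dots,c_{55},0)$ lies in $L^\perp$.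
   Context: A symmetric $2$-$(v,k,\lambda)$ design has $v$ points and $v$ blocks of size $k$, every pair of points in exactly $\lambda$ blocks; a biplane is one with $\lambda=2$. For a block $B$ of a design $(X,\mathcal{B})$, the residual design $\mathcal{D}_B$ has point set $X\setminus B$ and blocks $B_j\setminus B$ for $B_j\in\mathcal{B}$, $B_j\neq B$; the derived design $\mathcal{D}^B$ has point set $B$ and blocks $B\cap B_j$ for $B_j\neq B$. Duals of codes are taken with respect to the standard inner product over $GF(3)$. *)

theory Defs
  imports Main
begin

definition sym_design :: "nat \<Rightarrow> nat \<Rightarrow> nat \<Rightarrow> (nat \<Rightarrow> nat set) \<Rightarrow> bool" where
  "sym_design v k lam Bl \<longleftrightarrow>
     (\<forall>j\<in>{1..v}. Bl j \<subseteq> {1..v} \<and> card (Bl j) = k) \<and>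
     (\<forall>x\<in>{1..v}. \<forall>y\<in>{1..v}. x \<noteq> y \<longrightarrow>
        card {j\<in>{1..v}. x \<in> Bl j \<and> y \<in> Bl j} = lam)"

definition inc :: "(nat \<Rightarrow> nat set) \<Rightarrow> nat \<Rightarrow> nat \<Rightarrow> int" where
  "inc Bl i j = (if i \<in> Bl j then 1 else 0)"

text \<open>GF(3) code of length n spanned by the rows M i (i in R); vectors are functions
  nat => int on coordinates {1..n}, GF(3) elements represented by 0,1,2, zero outside {1..n}.\<close>
definition gf3_span :: "nat \<Rightarrow> nat set \<Rightarrow> (nat \<Rightarrow> nat \<Rightarrow> int) \<Rightarrow> (nat \<Rightarrow> int) set" where
  "gf3_span n R M = {v. \<exists>a :: nat \<Rightarrow> int.
      \<forall>j. v j = (if j \<in> {1..n} then (\<Sum>i\<in>R. a i * M i j) mod 3 else 0)}"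

definition gf3_dual :: "nat \<Rightarrow> (nat \<Rightarrow> int) set \<Rightarrow> (nat \<Rightarrow> int) set" where
  "gf3_dual n L = {c. \<forall>v\<in>L. (\<Sum>j=1..n. c j * v j) mod 3 = 0}"

end

theory Submission
  imports Defs
begin

text \<open>Let \<open>u = A c\<^sup>*\<close>. Orthogonality of \<open>c\<close> to the rows of \<open>A''\<close> says \<open>u \<equiv> 0 (mod 3)\<close> off
  the block \<open>B\<close>. In a symmetric design \<open>A\<^sup>T A = (k - \<lambda>) I + \<lambda> J\<close>, so for every block
  \<open>B\<^sub>j \<noteq> B\<close> the sum of \<open>u\<close> over \<open>B\<^sub>j\<close> is \<open>9 c\<^sub>j + 2 \<cdot> 12 \<equiv> 0\<close>. Two points \<open>p, q\<close> of \<open>B\<close>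
  lie in exactly one further block, which meets \<open>B\<close> in \<open>{p, q}\<close>; hence \<open>u\<^sub>p + u\<^sub>q \<equiv> 0\<close>.
  Comparing three points of \<open>B\<close> gives \<open>2 u\<^sub>p \<equiv> 0\<close>, so \<open>u \<equiv> 0\<close>, i.e. \<open>c\<^sup>*\<close> is orthogonal
  to every row of \<open>A\<close>.\<close>

lemma inc_mult_self [simp]: "inc Bl x j * inc Bl x j = inc Bl x j"
  by (simp add: inc_def)

lemma sum_inc_mult:
  assumes "Bl j \<subseteq> P" "finite P"
  shows "(\<Sum>x\<in>P. inc Bl x j * f x) = (\<Sum>x\<in>Bl j. f x)"
proof -
  have "(\<Sum>x\<in>P. inc Bl x j * f x) = (\<Sum>x\<in>P. if x \<in> Bl j then f x else 0)"
    by (rule sum.cong) (auto simp: inc_def)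
  also have "\<dots> = (\<Sum>x\<in>Bl j. f x)"
    using assms by (simp add: sum.If_cases Int_absorb1)
  finally show ?thesis .
qed

lemma sum_inc_mult_inc:
  "finite J \<Longrightarrow> (\<Sum>j\<in>J. inc Bl x j * inc Bl y j) = int (card {j\<in>J. x \<in> Bl j \<and> y \<in> Bl j})"
proof -
  assume "finite J"
  have "(\<Sum>j\<in>J. inc Bl x j * inc Bl y j) = (\<Sum>j\<in>J. if x \<in> Bl j \<and> y \<in> Bl j then 1 else 0)"
    by (rule sum.cong) (auto simp: inc_def)
  then show ?thesis
    using \<open>finite J\<close> by (simp add: sum.If_cases Int_def conj_commute)
qed

lemma sym_design_block_size:
  assumes "sym_design v k lam Bl" "j \<in> {1..v}"
  shows "(\<Sum>x\<in>{1..v}. inc Bl x j) = int k"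
  using sum_inc_mult[of Bl j "{1..v}" "\<lambda>_. 1"] assms by (simp add: sym_design_def)

lemma sym_design_pair_count:
  assumes "sym_design v k lam Bl" "x \<in> {1..v}" "y \<in> {1..v}" "x \<noteq> y"
  shows "(\<Sum>j\<in>{1..v}. inc Bl x j * inc Bl y j) = int lam"
  using assms by (simp add: sum_inc_mult_inc sym_design_def)

lemma sym_design_replication_mult:
  assumes d: "sym_design v k lam Bl" and x: "x \<in> {1..v}"
  shows "(int k - 1) * (\<Sum>j\<in>{1..v}. inc Bl x j) = int lam * (int v - 1)"
proof -
  have "int lam * (int v - 1) = (\<Sum>y\<in>{1..v}-{x}. \<Sum>j\<in>{1..v}. inc Bl x j * inc Bl y j)"
    using x sym_design_pair_count[OF d x] by (simp add: of_nat_diff)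
  also have "\<dots> = (\<Sum>j\<in>{1..v}. inc Bl x j * (\<Sum>y\<in>{1..v}-{x}. inc Bl y j))"
    by (subst sum.swap) (simp add: sum_distrib_left)
  also have "\<dots> = (\<Sum>j\<in>{1..v}. inc Bl x j * (int k - inc Bl x j))"
    using x sym_design_block_size[OF d] by (intro sum.cong) (simp_all add: sum_diff1)
  also have "\<dots> = (int k - 1) * (\<Sum>j\<in>{1..v}. inc Bl x j)"
    by (simp add: sum_distrib_left algebra_simps)
  finally show ?thesis ..
qed

lemma sym_design_param_identity:
  assumes d: "sym_design v k lam Bl" and "0 < v"
  shows "int lam * (int v - 1) = int k * (int k - 1)"
proof -
  have "int v * (int lam * (int v - 1)) = (\<Sum>x\<in>{1..v}. (int k - 1) * (\<Sum>j\<in>{1..v}. inc Bl x j))"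
    using sym_design_replication_mult[OF d] by simp
  also have "\<dots> = (int k - 1) * (\<Sum>j\<in>{1..v}. \<Sum>x\<in>{1..v}. inc Bl x j)"
    by (simp add: sum_distrib_left) (rule sum.swap)
  also have "\<dots> = int v * (int k * (int k - 1))"
    using sym_design_block_size[OF d] by simp
  finally show ?thesis
    using \<open>0 < v\<close> by simp
qed

lemma sym_design_replication:
  assumes d: "sym_design v k lam Bl" and "2 \<le> k" and x: "x \<in> {1..v}"
  shows "(\<Sum>j\<in>{1..v}. inc Bl x j) = int k"
proof -
  have "(int k - 1) * (\<Sum>j\<in>{1..v}. inc Bl x j) = (int k - 1) * int k"
    using sym_design_replication_mult[OF d x] sym_design_param_identity[OF d] x by simp
  then show ?thesis
    using \<open>2 \<le> k\<close> by simp
qed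

lemma sym_design_point_gram:
  assumes d: "sym_design v k lam Bl" and "2 \<le> k" and "x \<in> {1..v}" "y \<in> {1..v}"
  shows "(\<Sum>j\<in>{1..v}. inc Bl x j * inc Bl y j) = (if x = y then int k else int lam)"
  using assms sym_design_replication sym_design_pair_count by simp

lemma sym_design_inter_sum:
  assumes d: "sym_design v k lam Bl" and "2 \<le> k" and j0: "j0 \<in> {1..v}"
  shows "(\<Sum>j\<in>{1..v}. \<Sum>x\<in>{1..v}. inc Bl x j0 * inc Bl x j) = int k * int k"
proof -
  have "(\<Sum>j\<in>{1..v}. \<Sum>x\<in>{1..v}. inc Bl x j0 * inc Bl x j)
      = (\<Sum>x\<in>{1..v}. inc Bl x j0 * (\<Sum>j\<in>{1..v}. inc Bl x j))"
    by (subst sum.swap) (simp add: sum_distrib_left)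
  also have "\<dots> = (\<Sum>x\<in>{1..v}. inc Bl x j0) * int k"
    using sym_design_replication[OF d \<open>2 \<le> k\<close>] by (simp add: sum_distrib_right)
  finally show ?thesis
    using sym_design_block_size[OF d j0] by simp
qed

lemma sym_design_inter_sq_sum:
  assumes d: "sym_design v k lam Bl" and "2 \<le> k" and j0: "j0 \<in> {1..v}"
  shows "(\<Sum>j\<in>{1..v}. (\<Sum>x\<in>{1..v}. inc Bl x j0 * inc Bl x j)^2)
       = int lam * int k * int k + (int k - int lam) * int k"
proof -
  let ?P = "{1..v}" and ?a = "\<lambda>x. inc Bl x j0"
  have "(\<Sum>j\<in>?P. (\<Sum>x\<in>?P. ?a x * inc Bl x j)^2)
      = (\<Sum>x\<in>?P. \<Sum>y\<in>?P. ?a x * ?a y * (\<Sum>j\<in>?P. inc Bl x j * inc Bl y j))"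
  proof -
    have "(\<Sum>j\<in>?P. (\<Sum>x\<in>?P. ?a x * inc Bl x j)^2)
        = (\<Sum>j\<in>?P. \<Sum>x\<in>?P. \<Sum>y\<in>?P. ?a x * ?a y * (inc Bl x j * inc Bl y j))"
      by (simp add: power2_eq_square sum_product mult_ac)
    also have "\<dots> = (\<Sum>x\<in>?P. \<Sum>y\<in>?P. \<Sum>j\<in>?P. ?a x * ?a y * (inc Bl x j * inc Bl y j))"
      by (subst sum.swap, rule sum.cong[OF refl], rule sum.swap)
    finally show ?thesis
      by (simp add: sum_distrib_left)
  qed
  also have "\<dots> = (\<Sum>x\<in>?P. \<Sum>y\<in>?P. int lam * (?a x * ?a y) + (if x = y then (int k - int lam) * ?a x else 0))"
    using sym_design_point_gram[OF d \<open>2 \<le> k\<close>] by (intro sum.cong refl) (auto simp: algebra_simps)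
  also have "\<dots> = int lam * (\<Sum>x\<in>?P. ?a x) * (\<Sum>y\<in>?P. ?a y) + (int k - int lam) * (\<Sum>x\<in>?P. ?a x)"
    by (simp add: sum.distrib sum_product sum_distrib_left mult_ac)
  finally show ?thesis
    using sym_design_block_size[OF d j0] by simp
qed

lemma sym_design_block_gram:
  assumes d: "sym_design v k lam Bl" and "2 \<le> k" and j0: "j0 \<in> {1..v}" and j: "j \<in> {1..v}"
  shows "(\<Sum>x\<in>{1..v}. inc Bl x j0 * inc Bl x j) = (if j0 = j then int k else int lam)"
proof (cases "j0 = j")
  case True
  then show ?thesis
    using sym_design_block_size[OF d j0] by simp
next
  case False
  txt \<open>The intersection sizes \<open>m j\<close>, \<open>j \<noteq> j0\<close>, have mean \<open>\<lambda>\<close> and variance \<open>0\<close>.\<close>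
  define m where "m j = (\<Sum>x\<in>{1..v}. inc Bl x j0 * inc Bl x j)" for j
  let ?Q = "{1..v} - {j0}"
  have m_j0: "m j0 = int k"
    using sym_design_block_size[OF d j0] by (simp add: m_def)
  have sum_m: "(\<Sum>j\<in>?Q. m j) = int k * int k - int k"
    using sym_design_inter_sum[OF d \<open>2 \<le> k\<close> j0] j0 m_j0 by (simp add: sum_diff1 m_def)
  have sum_m_sq: "(\<Sum>j\<in>?Q. (m j)^2) = int lam * int k * (int k - 1)"
    using sym_design_inter_sq_sum[OF d \<open>2 \<le> k\<close> j0] j0 m_j0
    by (simp add: sum_diff1 m_def algebra_simps power2_eq_square)
  have card_Q: "int (card ?Q) = int v - 1"
    using j0 by (simp add: of_nat_diff)
  have "(\<Sum>j\<in>?Q. (m j - int lam)^2)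
      = (\<Sum>j\<in>?Q. (m j)^2) - 2 * int lam * (\<Sum>j\<in>?Q. m j) + int (card ?Q) * (int lam)^2"
    by (simp add: power2_diff sum_subtractf sum.distrib sum_distrib_left algebra_simps)
  also have "\<dots> = int lam * (int lam * (int v - 1) - int k * (int k - 1))"
    unfolding sum_m sum_m_sq card_Q by (simp add: algebra_simps power2_eq_square)
  also have "\<dots> = 0"
    using sym_design_param_identity[OF d] j0 by simp
  finally have "\<forall>j\<in>?Q. (m j - int lam)^2 = 0"
    by (subst sum_nonneg_eq_0_iff[symmetric]) simp_all
  then show ?thesis
    using False j by (simp add: m_def)
qed

lemma sym_design_block_inter:
  assumes "sym_design v k lam Bl" and "2 \<le> k" and "j0 \<in> {1..v}" "j \<in> {1..v}" "j0 \<noteq> j"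
  shows "card (Bl j0 \<inter> Bl j) = lam"
proof -
  have sub: "Bl j0 \<subseteq> {1..v}"
    using assms by (simp add: sym_design_def)
  then have "(\<Sum>x\<in>{1..v}. inc Bl x j0 * inc Bl x j) = (\<Sum>x\<in>Bl j0. inc Bl x j)"
    by (simp add: sum_inc_mult)
  also have "\<dots> = int (card (Bl j0 \<inter> Bl j))"
    using finite_subset[OF sub] by (simp add: inc_def sum.If_cases)
  finally show ?thesis
    using sym_design_block_gram[OF assms(1-4)] assms(5) by simp
qed

lemma sym_design_transpose_mult:
  assumes d: "sym_design v k lam Bl" and "2 \<le> k" and j: "j \<in> {1..v}"
  shows "(\<Sum>x\<in>{1..v}. inc Bl x j * (\<Sum>i\<in>{1..v}. c i * inc Bl x i))
       = (int k - int lam) * c j + int lam * (\<Sum>i\<in>{1..v}. c i)"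
proof -
  have "(\<Sum>x\<in>{1..v}. inc Bl x j * (\<Sum>i\<in>{1..v}. c i * inc Bl x i))
      = (\<Sum>i\<in>{1..v}. c i * (\<Sum>x\<in>{1..v}. inc Bl x j * inc Bl x i))"
    by (simp add: sum_distrib_left mult_ac) (rule sum.swap)
  also have "\<dots> = (\<Sum>i\<in>{1..v}. int lam * c i + (if i = j then (int k - int lam) * c j else 0))"
    using sym_design_block_gram[OF d \<open>2 \<le> k\<close> j] by (intro sum.cong) (auto simp: algebra_simps)
  finally show ?thesis
    using j by (simp add: sum.distrib sum_distrib_left)
qed

lemma biplane_block_through_pair:
  assumes d: "sym_design v k 2 Bl" and "2 \<le> k" and j: "j \<in> {1..v}"
    and pq: "p \<in> Bl j" "q \<in> Bl j" "p \<noteq> q"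
  obtains j' where "j' \<in> {1..v}" "j' \<noteq> j" "Bl j \<inter> Bl j' = {p, q}"
proof -
  let ?J = "{j\<in>{1..v}. p \<in> Bl j \<and> q \<in> Bl j}"
  have "Bl j \<subseteq> {1..v}"
    using d j by (simp add: sym_design_def)
  then have "p \<in> {1..v}" "q \<in> {1..v}"
    using pq by blast+
  then have "card ?J = 2"
    using d pq by (simp add: sym_design_def)
  moreover have "j \<in> ?J"
    using j pq by simp
  ultimately have "card (?J - {j}) = 1"
    by (simp add: card_Diff_singleton)
  then obtain j' where "?J - {j} = {j'}"
    by (rule card_1_singletonE)
  then have j': "j' \<in> ?J" "j' \<noteq> j"
    by blast+
  have "card (Bl j \<inter> Bl j') = 2"
    using sym_design_block_inter[OF d \<open>2 \<le> k\<close> j] j' by simp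
  moreover have "{p, q} \<subseteq> Bl j \<inter> Bl j'"
    using pq j' by simp
  ultimately have "Bl j \<inter> Bl j' = {p, q}"
    using card_subset_eq[of "Bl j \<inter> Bl j'" "{p, q}"] card.infinite \<open>p \<noteq> q\<close>
    by fastforce
  then show ?thesis
    using that j' by blast
qed

lemma biplane_dvd_pair_on_block:
  fixes u :: "nat \<Rightarrow> int"
  assumes d: "sym_design v k 2 Bl" and "2 \<le> k" and j: "j \<in> {1..v}"
    and off_block: "\<forall>x\<in>{1..v} - Bl j. m dvd u x"
    and other_blocks: "\<forall>j'\<in>{1..v} - {j}. m dvd (\<Sum>x\<in>Bl j'. u x)"
    and pq: "p \<in> Bl j" "q \<in> Bl j" "p \<noteq> q"
  shows "m dvd u p + u q"
proof -
  obtain j' where j': "j' \<in> {1..v}" "j' \<noteq> j" and inter: "Bl j \<inter> Bl j' = {p, q}"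
    using biplane_block_through_pair[OF d \<open>2 \<le> k\<close> j pq] .
  have sub: "Bl j' \<subseteq> {1..v}"
    using d j' by (simp add: sym_design_def)
  then have split: "Bl j' = (Bl j' - Bl j) \<union> {p, q}"
    using inter by blast
  have "(\<Sum>x\<in>Bl j'. u x) = (\<Sum>x\<in>Bl j' - Bl j. u x) + (u p + u q)"
    using finite_subset[OF sub] inter \<open>p \<noteq> q\<close> by (subst split, subst sum.union_disjoint) auto
  moreover have "m dvd (\<Sum>x\<in>Bl j' - Bl j. u x)"
    using off_block sub by (intro dvd_sum) blast
  moreover have "m dvd (\<Sum>x\<in>Bl j'. u x)"
    using other_blocks j' by simp
  ultimately show ?thesis
    by (metis dvd_add_right_iff)
qed

lemma biplane_dvd_on_block:
  fixes u :: "nat \<Rightarrow> int"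
  assumes d: "sym_design v k 2 Bl" and "3 \<le> k" and j: "j \<in> {1..v}" and "odd m"
    and off_block: "\<forall>x\<in>{1..v} - Bl j. m dvd u x"
    and other_blocks: "\<forall>j'\<in>{1..v} - {j}. m dvd (\<Sum>x\<in>Bl j'. u x)"
    and p: "p \<in> Bl j"
  shows "m dvd u p"
proof -
  have "Bl j \<subseteq> {1..v}" "card (Bl j) = k"
    using d j by (simp_all add: sym_design_def)
  then have "card (Bl j - {p}) = k - 1" "finite (Bl j)"
    using p by (auto intro: finite_subset)
  then obtain q r where qr: "q \<in> Bl j - {p}" "r \<in> Bl j - {p}" "q \<noteq> r"
    using \<open>3 \<le> k\<close> card_le_Suc0_iff_eq[of "Bl j - {p}"] by auto
  note pair = biplane_dvd_pair_on_block[OF d _ j off_block other_blocks]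
  have "m dvd (u p + u q) + (u p + u r) - (u q + u r)"
    using qr p \<open>3 \<le> k\<close> by (intro dvd_diff dvd_add pair) auto
  then have "m dvd 2 * u p"
    by (simp add: algebra_simps)
  then show ?thesis
    using \<open>odd m\<close> by (simp add: coprime_dvd_mult_right_iff)
qed

lemma sum_mult_mod_right_eq:
  fixes c f :: "nat \<Rightarrow> int"
  shows "(\<Sum>j\<in>J. c j * (f j mod m)) mod m = (\<Sum>j\<in>J. c j * f j) mod m"
  by (subst mod_sum_eq[symmetric]) (simp add: mod_mult_right_eq mod_sum_eq)

lemma gf3_dual_span_iff:
  assumes "finite R"
  shows "c \<in> gf3_dual n (gf3_span n R M) \<longleftrightarrow> (\<forall>i\<in>R. 3 dvd (\<Sum>j=1..n. c j * M i j))"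
proof
  assume dual: "c \<in> gf3_dual n (gf3_span n R M)"
  show "\<forall>i\<in>R. 3 dvd (\<Sum>j=1..n. c j * M i j)"
  proof
    fix i assume i: "i \<in> R"
    define a :: "nat \<Rightarrow> int" where "a i' = (if i' = i then 1 else 0)" for i'
    have "(\<Sum>i'\<in>R. a i' * M i' j) = (\<Sum>i'\<in>R. if i' = i then M i j else 0)" for j
      by (rule sum.cong) (simp_all add: a_def)
    then have "(\<Sum>i'\<in>R. a i' * M i' j) = M i j" for j
      using i \<open>finite R\<close> by simp
    then have "(\<lambda>j. if j \<in> {1..n} then M i j mod 3 else 0) \<in> gf3_span n R M"
      unfolding gf3_span_def by (intro CollectI exI[of _ a]) simp
    with dual have "(\<Sum>j=1..n. c j * (if j \<in> {1..n} then M i j mod 3 else 0)) mod 3 = 0"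
      unfolding gf3_dual_def mem_Collect_eq by (rule bspec)
    moreover have "(\<Sum>j=1..n. c j * (if j \<in> {1..n} then M i j mod 3 else 0))
        = (\<Sum>j=1..n. c j * (M i j mod 3))"
      by (rule sum.cong) simp_all
    ultimately have "(\<Sum>j=1..n. c j * (M i j mod 3)) mod 3 = 0"
      by simp
    then show "3 dvd (\<Sum>j=1..n. c j * M i j)"
      by (simp add: sum_mult_mod_right_eq mod_eq_0_iff_dvd)
  qed
next
  assume rows: "\<forall>i\<in>R. 3 dvd (\<Sum>j=1..n. c j * M i j)"
  show "c \<in> gf3_dual n (gf3_span n R M)"
    unfolding gf3_dual_def
  proof safe
    fix w assume "w \<in> gf3_span n R M"
    then obtain a :: "nat \<Rightarrow> int" where
      w: "\<And>j. w j = (if j \<in> {1..n} then (\<Sum>i\<in>R. a i * M i j) mod 3 else 0)"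
      unfolding gf3_span_def by blast
    have "(\<Sum>j=1..n. c j * w j) = (\<Sum>j=1..n. c j * ((\<Sum>i\<in>R. a i * M i j) mod 3))"
      by (rule sum.cong) (simp_all add: w)
    then have "(\<Sum>j=1..n. c j * w j) mod 3 = (\<Sum>j=1..n. c j * (\<Sum>i\<in>R. a i * M i j)) mod 3"
      by (simp add: sum_mult_mod_right_eq)
    also have "(\<Sum>j=1..n. c j * (\<Sum>i\<in>R. a i * M i j)) = (\<Sum>i\<in>R. a i * (\<Sum>j=1..n. c j * M i j))"
      by (simp add: sum_distrib_left mult_ac) (rule sum.swap)
    also have "\<dots> mod 3 = 0"
      using rows by (simp add: mod_eq_0_iff_dvd dvd_sum)
    finally show "(\<Sum>j=1..n. c j * w j) mod 3 = 0" .
  qed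
qed

lemma sum_01_eq_card:
  fixes c :: "nat \<Rightarrow> int"
  assumes "finite A" "\<forall>j\<in>A. c j \<in> {0, 1}"
  shows "(\<Sum>j\<in>A. c j) = int (card {j\<in>A. c j \<noteq> 0})"
proof -
  have "(\<Sum>j\<in>A. c j) = (\<Sum>j\<in>A. if c j \<noteq> 0 then 1 else 0)"
    using assms(2) by (intro sum.cong) auto
  then show ?thesis
    using assms(1) by (simp add: sum.If_cases Int_def conj_commute)
qed

theorem lemma2:
  fixes Bl :: "nat \<Rightarrow> nat set" and c :: "nat \<Rightarrow> int"
  assumes design: "sym_design 56 11 2 Bl"
    and lastB: "Bl 56 = {46..56}"
    and c01: "\<forall>j\<in>{1..55}. c j \<in> {0, 1}"
    and wt: "card {j\<in>{1..55}. c j \<noteq> 0} = 12"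
    and cdual: "c \<in> gf3_dual 55 (gf3_span 55 {1..45} (inc Bl))"
  shows "(\<lambda>j. if j = 56 then 0 else c j) \<in> gf3_dual 56 (gf3_span 56 {1..56} (inc Bl))"
proof -
  define c' where "c' = (\<lambda>j. if j = 56 then 0 else c j)"
  define u where "u x = (\<Sum>j\<in>{1..56}. c' j * inc Bl x j)" for x
  have points: "{1..56::nat} = insert 56 {1..55}"
    by auto
  have u_eq: "u x = (\<Sum>j=1..55. c j * inc Bl x j)" for x
    unfolding u_def points by (subst sum.insert) (auto simp: c'_def intro!: sum.cong)
  have residual: "\<forall>x\<in>{1..56} - Bl 56. 3 dvd u x"
    using cdual lastB by (auto simp: gf3_dual_span_iff u_eq)
  have "(\<Sum>j\<in>{1..56}. c' j) = (\<Sum>j=1..55. c j)"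
    unfolding points by (subst sum.insert) (auto simp: c'_def intro!: sum.cong)
  also have "\<dots> = 12"
    using sum_01_eq_card[OF _ c01] wt by simp
  finally have weight: "(\<Sum>j\<in>{1..56}. c' j) = 12" .
  have other_blocks: "\<forall>j\<in>{1..56} - {56}. 3 dvd (\<Sum>x\<in>Bl j. u x)"
  proof
    fix j :: nat assume j: "j \<in> {1..56} - {56}"
    then have "(\<Sum>x\<in>Bl j. u x) = (\<Sum>x\<in>{1..56}. inc Bl x j * u x)"
      using design by (intro sum_inc_mult[symmetric]) (simp_all add: sym_design_def)
    also have "\<dots> = 9 * c j + 24"
      using sym_design_transpose_mult[OF design _, of j c'] j weight by (simp add: u_def c'_def)
    finally show "3 dvd (\<Sum>x\<in>Bl j. u x)"
      by presburger
  qed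
  have "\<forall>x\<in>{1..56}. 3 dvd u x"
    using biplane_dvd_on_block[OF design _ _ _ residual other_blocks] residual by auto
  then show ?thesis
    by (simp add: gf3_dual_span_iff u_def flip: c'_def)
qed

end
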